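(* There is an absolute constant $C$ such that for all integers $n \ge 3$, $g(n,3) \le C\, n\, (\log_2 n)^{\log_2 7}$.
   Context: For integers $2\le k\le n$, let $S_n$ denote the set of permutations of $[n]=\{1,\dots,n\}$ (written as sequences), and $S_{n,k}$ the set of all sequences of $k$ distinct elements of $[n]$. A sequence $\kappa\in S_{n,k}$ is a subsequence of a permutation $\pi\in S_n$ if its elements appear in $\pi$ in the same relative order as in $\kappa$. A perfect sequence covering array ${\rm PSCA}(n,k)$ with multiplicity $\lambda$ (a positive integer) is a multiset $X$ of elements of $S_n$ such that every $\kappa\in S_{n,k}$ is a subsequence of exactly $\lambda$ elements of $X$ (counted with multiplicity). $g(n,k)$ denotes the smallest $\lambda$ for which a ${\rm PSCA}(n,k)$ with multiplicity $\lambda$ exists. *)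

theory Defs
  imports "HOL-Analysis.Analysis" "HOL-Library.Multiset" "HOL-Library.Sublist"
begin

definition perms_n :: "nat \<Rightarrow> nat list set" where
  "perms_n n = {xs. distinct xs \<and> set xs = {1..n}}"

definition seqs_nk :: "nat \<Rightarrow> nat \<Rightarrow> nat list set" where
  "seqs_nk n k = {xs. distinct xs \<and> length xs = k \<and> set xs \<subseteq> {1..n}}"

definition is_PSCA :: "nat \<Rightarrow> nat \<Rightarrow> nat \<Rightarrow> nat list multiset \<Rightarrow> bool" where
  "is_PSCA n k lam X \<longleftrightarrow>
     set_mset X \<subseteq> perms_n n \<and>
     (\<forall>\<kappa> \<in> seqs_nk n k. size (filter_mset (\<lambda>\<pi>. subseq \<kappa> \<pi>) X) = lam)"

definition g :: "nat \<Rightarrow> nat \<Rightarrow> nat" where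
  "g n k = (LEAST lam. lam > 0 \<and> (\<exists>X. is_PSCA n k lam X))"

end

theory Submission
  imports Defs "HOL-Algebra.Algebraic_Closure_Type" "HOL-Library.Z2"
begin

text \<open>
  Perfect covering arrays for triples can be squared over a finite field. Let the
  permutations XS of a field F with q elements cover every ordered triple exactly
  \<lambda> times. For each of the q + 1 parallel classes of lines of the affine plane
  F \<times> F and each \<pi> in XS, list the lines of the class in the order \<pi> and
  the points of each line in the order \<pi> or in its reverse. Given three distinct
  points and a class, the number of these orders that list the points in the given
  order depends only on which of the points share a line of that class; as two distinct
  points lie on exactly one common line, summing over the classes gives 2(q + 1)\<lambda>
  for every triple.

  Starting from a PSCA(4,3) of multiplicity 1 and passing from GF(2^j) to GF(2^(2j)), one
  gets g(2^k, 3) \<le> 2^k 7^d whenever 2 \<le> k \<le> 2^d. With k and d the least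
  such integers for n \<le> 2^k, the factor 7^d is at most 49 (log n)^(log 7).
\<close>

section \<open>Relative order of elements in a list\<close>

lemma subseq_set: "subseq xs ys \<Longrightarrow> set xs \<subseteq> set ys"
  by (auto elim: list_emb_set)

lemma subseq_map_inj_on_iff:
  assumes "inj_on f (set xs \<union> set ys)"
  shows "subseq (map f xs) (map f ys) \<longleftrightarrow> subseq xs ys"
proof
  assume "subseq (map f xs) (map f ys)"
  then have "subseq (map (inv_into (set xs \<union> set ys) f) (map f xs))
                    (map (inv_into (set xs \<union> set ys) f) (map f ys))"
    by (rule subseq_map)
  then show "subseq xs ys"
    using assms by (simp add: map_idI)
qed (rule subseq_map)

lemma subseq_pair_append:
  "subseq [x, y] (u @ v) \<longleftrightarrow> subseq [x, y] u \<or> subseq [x, y] v \<or> x \<in> set u \<and> y \<in> set v"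
  unfolding subseq_append_iff
  by (auto simp: Cons_eq_append_conv subseq_singleton_left)
    (metis subseq_singleton_left)

lemma subseq_pair_iff: "subseq [x, y] L \<longleftrightarrow> (\<exists>u v w. L = u @ x # v @ y # w)"
proof
  assume "subseq [x, y] L"
  then obtain u z where "L = u @ x # z" "y \<in> set z"
    by (auto dest!: list_emb_ConsD simp: subseq_singleton_left)
  moreover from \<open>y \<in> set z\<close> obtain v w where "z = v @ y # w"
    by (auto dest: split_list)
  ultimately show "\<exists>u v w. L = u @ x # v @ y # w"
    by blast
qed (auto simp: subseq_pair_append subseq_singleton_left)

lemma subseq_pair_rev: "subseq [x, y] (rev L) \<longleftrightarrow> subseq [y, x] L"
proof -
  have rev_dir: "subseq [y, x] M" if xy: "subseq [x, y] (rev M)" for x y M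
  proof -
    obtain u v w where "rev M = u @ x # v @ y # w"
      using xy unfolding subseq_pair_iff by blast
    then have "M = rev w @ y # rev v @ x # rev u"
      by (metis rev_rev_ident rev.simps(2) rev_append append.assoc append_Cons append_Nil)
    then show ?thesis
      unfolding subseq_pair_iff by blast
  qed
  show ?thesis
    using rev_dir[of x y L] rev_dir[of y x "rev L"] by auto
qed

lemma subseq_pair_total:
  assumes "x \<in> set L" "y \<in> set L" "x \<noteq> y"
  shows "subseq [x, y] L \<or> subseq [y, x] L"
proof -
  obtain u w where L: "L = u @ y # w"
    using assms(2) by (auto dest: split_list)
  then show ?thesis
    using assms(1,3) by (auto simp: subseq_pair_append subseq_singleton_left)
qed

lemma subseq_pair_at:
  assumes "distinct (u @ y # w)"
  shows "subseq [x, y] (u @ y # w) \<longleftrightarrow> x \<in> set u"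
    and "subseq [y, z] (u @ y # w) \<longleftrightarrow> z \<in> set w"
  using assms subseq_set[of "[x, y]" u] subseq_set[of "[x, y]" w] subseq_set[of "[y, z]" u]
    subseq_set[of "[y, z]" w]
  by (auto simp: subseq_pair_append[of _ _ u "y # w"] subseq_singleton_left)

lemma subseq_pair_asym:
  assumes "distinct L" "subseq [x, y] L"
  shows "\<not> subseq [y, x] L"
proof -
  obtain u v w where "L = (u @ x # v) @ y # w"
    using assms(2) unfolding subseq_pair_iff by auto
  then show ?thesis
    using assms(1) subseq_pair_at(2)[of "u @ x # v" y w x] by auto
qed

lemma subseq_triple_iff:
  assumes "distinct L"
  shows "subseq [x, y, z] L \<longleftrightarrow> subseq [x, y] L \<and> subseq [y, z] L"
proof
  assume "subseq [x, y, z] L"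
  moreover have "subseq [x, y] [x, y, z]" "subseq [y, z] [x, y, z]"
    by simp_all
  ultimately show "subseq [x, y] L \<and> subseq [y, z] L"
    using subseq_order.order_trans by blast
next
  assume xyz: "subseq [x, y] L \<and> subseq [y, z] L"
  then obtain u w where L: "L = u @ y # w"
    using subseq_set[of "[y, z]" L] by (auto dest: split_list)
  with xyz assms have "subseq [x] u" "subseq [y, z] (y # w)"
    by (auto simp: subseq_pair_at subseq_singleton_left)
  then show "subseq [x, y, z] L"
    unfolding L using list_emb_append_mono[of "(=)" "[x]" u "[y, z]" "y # w"] by simp
qed

lemma subseq_pair_trans:
  assumes "distinct L" "subseq [x, y] L" "subseq [y, z] L"
  shows "subseq [x, z] L"
proof -
  have "subseq [x, z] [x, y, z]"
    by simp
  moreover have "subseq [x, y, z] L"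
    using subseq_triple_iff[OF assms(1)] assms(2,3) by simp
  ultimately show ?thesis
    by (rule subseq_order.order_trans)
qed

lemma subseq_pair_third_cases:
  assumes "distinct L" "{a, b, c} \<subseteq> set L" "c \<noteq> a" "c \<noteq> b"
  shows "subseq [a, b] L \<and> subseq [c, a] L \<longleftrightarrow> subseq [c, a, b] L"
    and "subseq [a, b] L \<and> \<not> subseq [c, a] L \<and> subseq [c, b] L \<longleftrightarrow> subseq [a, c, b] L"
    and "subseq [a, b] L \<and> \<not> subseq [c, a] L \<and> \<not> subseq [c, b] L \<longleftrightarrow> subseq [a, b, c] L"
proof -
  have "subseq [a, c] L \<longleftrightarrow> \<not> subseq [c, a] L" "subseq [b, c] L \<longleftrightarrow> \<not> subseq [c, b] L"
    using assms subseq_pair_total[of _ L] subseq_pair_asym[OF assms(1)] by (metis insert_subset)+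
  then show "subseq [a, b] L \<and> subseq [c, a] L \<longleftrightarrow> subseq [c, a, b] L"
    and "subseq [a, b] L \<and> \<not> subseq [c, a] L \<and> subseq [c, b] L \<longleftrightarrow> subseq [a, c, b] L"
    and "subseq [a, b] L \<and> \<not> subseq [c, a] L \<and> \<not> subseq [c, b] L \<longleftrightarrow> subseq [a, b, c] L"
    using subseq_triple_iff[OF assms(1)] subseq_pair_trans[OF assms(1)] by blast+
qed

section \<open>Perfect covering of triples on an arbitrary ground set\<close>

definition psca_on :: "'a set \<Rightarrow> nat \<Rightarrow> 'a list multiset \<Rightarrow> bool" where
  "psca_on A lam XS \<longleftrightarrow> (\<forall>\<pi> \<in># XS. distinct \<pi> \<and> set \<pi> = A) \<and>
     (\<forall>a\<in>A. \<forall>b\<in>A. \<forall>c\<in>A. distinct [a, b, c] \<longrightarrow> size {#\<pi> \<in># XS. subseq [a, b, c] \<pi>#} = lam)"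

lemma psca_on_memD:
  "psca_on A lam XS \<Longrightarrow> \<pi> \<in># XS \<Longrightarrow> distinct \<pi> \<and> set \<pi> = A"
  unfolding psca_on_def by blast

lemma psca_on_countD:
  "psca_on A lam XS \<Longrightarrow> {a, b, c} \<subseteq> A \<Longrightarrow> distinct [a, b, c] \<Longrightarrow>
    size {#\<pi> \<in># XS. subseq [a, b, c] \<pi>#} = lam"
  unfolding psca_on_def by blast

lemma size_filter_mset_cong:
  "(\<And>x. x \<in># M \<Longrightarrow> P x \<longleftrightarrow> Q x) \<Longrightarrow> size {#x \<in># M. P x#} = size {#x \<in># M. Q x#}"
  using filter_mset_cong[of M M P Q] by simp

lemma size_filter_mset_split:
  "size {#x \<in># M. P x#} = size {#x \<in># M. P x \<and> Q x#} + size {#x \<in># M. P x \<and> \<not> Q x#}"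
  by (subst multiset_partition[of "filter_mset P M" Q]) (simp add: filter_filter_mset)

lemma psca_on_pair_count:
  assumes XS: "psca_on A lam XS" and "finite A" "card A \<ge> 3" "a \<in> A" "b \<in> A" "a \<noteq> b"
  shows "size {#\<pi> \<in># XS. subseq [a, b] \<pi>#} = 3 * lam"
proof -
  have "card {a, b} \<le> 2"
    by (simp add: card_insert_if)
  then have "\<not> A \<subseteq> {a, b}"
    using card_mono[of "{a, b}" A] assms(3) by auto
  then obtain c where c: "c \<in> A" "c \<noteq> a" "c \<noteq> b"
    by blast
  let ?S = "\<lambda>P. size {#\<pi> \<in># XS. P \<pi>#}"
  have "?S (\<lambda>\<pi>. subseq [a, b] \<pi>) = ?S (\<lambda>\<pi>. subseq [a, b] \<pi> \<and> subseq [c, a] \<pi>)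
      + ?S (\<lambda>\<pi>. subseq [a, b] \<pi> \<and> \<not> subseq [c, a] \<pi> \<and> subseq [c, b] \<pi>)
      + ?S (\<lambda>\<pi>. subseq [a, b] \<pi> \<and> \<not> subseq [c, a] \<pi> \<and> \<not> subseq [c, b] \<pi>)"
    using size_filter_mset_split[of "\<lambda>\<pi>. subseq [a, b] \<pi>" XS "\<lambda>\<pi>. subseq [c, a] \<pi>"]
      size_filter_mset_split[of "\<lambda>\<pi>. subseq [a, b] \<pi> \<and> \<not> subseq [c, a] \<pi>" XS "\<lambda>\<pi>. subseq [c, b] \<pi>"]
    by (simp only: conj_assoc)
  also have "\<dots> = ?S (\<lambda>\<pi>. subseq [c, a, b] \<pi>) + ?S (\<lambda>\<pi>. subseq [a, c, b] \<pi>)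
      + ?S (\<lambda>\<pi>. subseq [a, b, c] \<pi>)"
    using psca_on_memD[OF XS] c assms(4,5)
    by (simp add: subseq_pair_third_cases cong: size_filter_mset_cong)
  also have "\<dots> = 3 * lam"
    using psca_on_countD[OF XS] assms(4-6) c by simp
  finally show ?thesis .
qed

lemma psca_on_pair_count_split:
  assumes XS: "psca_on A lam XS" and "finite A" "card A \<ge> 3"
    and "u \<in> A" "v \<in> A" "u \<noteq> v" "s \<in> A" "t \<in> A" "s \<noteq> t"
  shows "size {#\<pi> \<in># XS. subseq [u, v] \<pi> \<and> subseq [s, t] \<pi>#}
       + size {#\<pi> \<in># XS. subseq [u, v] \<pi> \<and> subseq [t, s] \<pi>#} = 3 * lam"
proof -
  have "size {#\<pi> \<in># XS. subseq [u, v] \<pi> \<and> subseq [t, s] \<pi>#}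
      = size {#\<pi> \<in># XS. subseq [u, v] \<pi> \<and> \<not> subseq [s, t] \<pi>#}"
  proof (rule size_filter_mset_cong)
    fix \<pi> assume "\<pi> \<in># XS"
    then have "distinct \<pi>" "set \<pi> = A"
      using psca_on_memD[OF XS] by auto
    then have "subseq [t, s] \<pi> \<longleftrightarrow> \<not> subseq [s, t] \<pi>"
      using assms(7-9) subseq_pair_total[of s \<pi> t] subseq_pair_asym by metis
    then show "subseq [u, v] \<pi> \<and> subseq [t, s] \<pi> \<longleftrightarrow> subseq [u, v] \<pi> \<and> \<not> subseq [s, t] \<pi>"
      by simp
  qed
  then show ?thesis
    using size_filter_mset_split[of "\<lambda>\<pi>. subseq [u, v] \<pi>" XS "\<lambda>\<pi>. subseq [s, t] \<pi>"]
      psca_on_pair_count[OF assms(1-6)] by linarith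
qed

lemma psca_on_restrict:
  assumes XS: "psca_on A lam XS" and "B \<subseteq> A"
  shows "psca_on B lam {#filter (\<lambda>x. x \<in> B) \<pi>. \<pi> \<in># XS#}"
  unfolding psca_on_def
proof (intro conjI ballI impI)
  fix \<pi>' assume "\<pi>' \<in># {#filter (\<lambda>x. x \<in> B) \<pi>. \<pi> \<in># XS#}"
  then show "distinct \<pi>'" "set \<pi>' = B"
    using psca_on_memD[OF XS] assms(2) by auto
next
  fix a b c assume abc: "a \<in> B" "b \<in> B" "c \<in> B" "distinct [a, b, c]"
  have "subseq [a, b, c] (filter (\<lambda>x. x \<in> B) \<pi>) \<longleftrightarrow> subseq [a, b, c] \<pi>" for \<pi>
    using subseq_filter[of "[a, b, c]" \<pi> "\<lambda>x. x \<in> B"] abc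
      subseq_order.order_trans[OF _ subseq_filter_left[of "\<lambda>x. x \<in> B" \<pi>]]
    by auto
  moreover have "{a, b, c} \<subseteq> A"
    using abc assms(2) by auto
  ultimately show "size {#\<pi> \<in># {#filter (\<lambda>x. x \<in> B) \<pi>. \<pi> \<in># XS#}. subseq [a, b, c] \<pi>#} = lam"
    using psca_on_countD[OF XS _ abc(4)] by (simp add: filter_mset_image_mset)
qed

lemma psca_on_image:
  assumes XS: "psca_on A lam XS" and f: "bij_betw f A B"
  shows "psca_on B lam {#map f \<pi>. \<pi> \<in># XS#}"
  unfolding psca_on_def
proof (intro conjI ballI impI)
  fix \<pi>' assume "\<pi>' \<in># {#map f \<pi>. \<pi> \<in># XS#}"
  then show "distinct \<pi>'" "set \<pi>' = B"
    using psca_on_memD[OF XS] f by (auto simp: distinct_map bij_betw_def inj_on_subset)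
next
  fix a b c assume abc: "a \<in> B" "b \<in> B" "c \<in> B" "distinct [a, b, c]"
  define g where "g = inv_into A f"
  have "g x \<in> A" "f (g x) = x" if "x \<in> B" for x
    using f that unfolding g_def bij_betw_def by (auto intro: inv_into_into f_inv_into_f)
  then have g: "g a \<in> A" "g b \<in> A" "g c \<in> A" "[a, b, c] = map f [g a, g b, g c]"
    using abc by auto
  have inj: "inj_on f A"
    using f by (rule bij_betw_imp_inj_on)
  have "size {#\<pi> \<in># {#map f \<pi>. \<pi> \<in># XS#}. subseq [a, b, c] \<pi>#}
      = size {#\<pi> \<in># XS. subseq [a, b, c] (map f \<pi>)#}"
    by (simp add: filter_mset_image_mset)
  also have "\<dots> = size {#\<pi> \<in># XS. subseq [g a, g b, g c] \<pi>#}"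
  proof (rule size_filter_mset_cong)
    fix \<pi> assume "\<pi> \<in># XS"
    then show "subseq [a, b, c] (map f \<pi>) \<longleftrightarrow> subseq [g a, g b, g c] \<pi>"
      unfolding g(4) using psca_on_memD[OF XS] g(1-3)
      by (intro subseq_map_inj_on_iff inj_on_subset[OF inj]) auto
  qed
  also have "\<dots> = lam"
  proof -
    have "distinct [g a, g b, g c]"
      using abc(4) g(4) by (metis distinct_map)
    then show ?thesis
      using psca_on_countD[OF XS, of "g a" "g b" "g c"] g(1-3) by auto
  qed
  finally show "size {#\<pi> \<in># {#map f \<pi>. \<pi> \<in># XS#}. subseq [a, b, c] \<pi>#} = lam" .
qed

lemma psca_on_card_le:
  assumes "psca_on A lam XS" "finite A" "finite B" "card B \<le> card A"
  obtains Y where "psca_on B lam Y"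
proof -
  obtain A' where A': "A' \<subseteq> A" "card A' = card B"
    using assms(4) by (meson obtain_subset_with_card_n)
  moreover have "finite A'"
    using A'(1) assms(2) finite_subset by blast
  ultimately obtain f where "bij_betw f A' B"
    using assms(3) by (metis finite_same_card_bij)
  then show thesis
    using that psca_on_image psca_on_restrict[OF assms(1) A'(1)] by blast
qed

lemma is_PSCA_if_psca_on:
  assumes "psca_on {1..n} lam XS"
  shows "is_PSCA n 3 lam XS"
  unfolding is_PSCA_def
proof (intro conjI ballI)
  show "set_mset XS \<subseteq> perms_n n"
    using psca_on_memD[OF assms] by (auto simp: perms_n_def)
next
  fix \<kappa> assume "\<kappa> \<in> seqs_nk n 3"
  then obtain a b c where "\<kappa> = [a, b, c]" "distinct [a, b, c]" "{a, b, c} \<subseteq> {1..n}"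
    by (auto simp: seqs_nk_def numeral_3_eq_3 length_Suc_conv)
  then show "size {#\<pi> \<in># XS. subseq \<kappa> \<pi>#} = lam"
    using psca_on_countD[OF assms] by blast
qed

lemma g_le_if_psca_on:
  assumes "psca_on {1..n} lam XS" "lam > 0"
  shows "g n 3 \<le> lam"
  unfolding g_def using is_PSCA_if_psca_on[OF assms(1)] assms(2) by (intro Least_le) blast

section \<open>Lexicographic orders of a square\<close>

lemma subseq_pair_product:
  assumes "distinct \<pi>" "a \<in> set \<pi>" "a' \<in> set \<pi>" "b \<in> set \<sigma>" "b' \<in> set \<sigma>"
  shows "subseq [(a, b), (a', b')] (List.product \<pi> \<sigma>) \<longleftrightarrow>
    (if a = a' then subseq [b, b'] \<sigma> else subseq [a, a'] \<pi>)"
  using assms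
proof (induction \<pi>)
  case (Cons c \<pi>)
  have row: "subseq [(a, b), (a', b')] (map (Pair c) \<sigma>) \<longleftrightarrow> a = c \<and> a' = c \<and> subseq [b, b'] \<sigma>"
  proof
    assume sub: "subseq [(a, b), (a', b')] (map (Pair c) \<sigma>)"
    then have "a = c" "a' = c"
      using subseq_set by fastforce+
    moreover have inj: "inj_on (Pair c) (set [b, b'] \<union> set \<sigma>)"
      by (auto intro: inj_onI)
    ultimately show "a = c \<and> a' = c \<and> subseq [b, b'] \<sigma>"
      using sub subseq_map_inj_on_iff[OF inj] by simp
  qed (use subseq_map[of "[b, b']" \<sigma> "Pair c"] in auto)
  have rest: "\<not> subseq [(a, b), (a', b')] (List.product \<pi> \<sigma>)" if "a \<notin> set \<pi> \<or> a' \<notin> set \<pi>"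
    using that subseq_set[of "[(a, b), (a', b')]" "List.product \<pi> \<sigma>"] by auto
  have c: "c \<notin> set \<pi>" "distinct \<pi>"
    using Cons.prems(1) by auto
  have "subseq [(a, b), (a', b')] (List.product (c # \<pi>) \<sigma>) \<longleftrightarrow>
      a = c \<and> a' = c \<and> subseq [b, b'] \<sigma> \<or> subseq [(a, b), (a', b')] (List.product \<pi> \<sigma>) \<or>
      a = c \<and> a' \<in> set \<pi>"
    using Cons.prems(4,5) by (auto simp add: subseq_pair_append row)
  also have "\<dots> \<longleftrightarrow> (if a = a' then subseq [b, b'] \<sigma> else subseq [a, a'] (c # \<pi>))"
  proof (cases "a = c \<or> a' = c")
    case True
    then have "\<not> subseq [(a, b), (a', b')] (List.product \<pi> \<sigma>)"
      using c(1) rest by blast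
    moreover have "\<not> subseq [a, c] \<pi>"
      using c(1) subseq_set[of "[a, c]" \<pi>] by auto
    ultimately show ?thesis
      using True c(1) by (auto simp: subseq_singleton_left)
  next
    case False
    then show ?thesis
      using Cons.IH[OF c(2)] Cons.prems(2-5) by auto
  qed
  finally show ?case .
qed simp

definition lex_orders :: "'a list multiset \<Rightarrow> ('a \<times> 'a) list multiset" where
  "lex_orders XS = {#List.product \<pi> \<pi>. \<pi> \<in># XS#} + {#List.product \<pi> (rev \<pi>). \<pi> \<in># XS#}"

lemma lex_orders_memD:
  assumes "psca_on A lam XS" "\<tau> \<in># lex_orders XS"
  shows "distinct \<tau> \<and> set \<tau> = A \<times> A"
  using assms by (auto simp: lex_orders_def distinct_product dest: psca_on_memD)

lemma subseq_triple_product: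
  assumes "distinct \<pi>" "distinct \<sigma>" "set \<sigma> = set \<pi>" "{(a1, b1), (a2, b2), (a3, b3)} \<subseteq> set \<pi> \<times> set \<pi>"
  shows "subseq [(a1, b1), (a2, b2), (a3, b3)] (List.product \<pi> \<sigma>) \<longleftrightarrow>
    (if a1 = a2 then subseq [b1, b2] \<sigma> else subseq [a1, a2] \<pi>) \<and>
    (if a2 = a3 then subseq [b2, b3] \<sigma> else subseq [a2, a3] \<pi>)"
  using assms by (simp add: subseq_triple_iff distinct_product subseq_pair_product)

lemma size_filter_lex_orders:
  assumes XS: "psca_on A lam XS" and p: "{(a1, b1), (a2, b2), (a3, b3)} \<subseteq> A \<times> A"
  shows "size {#\<tau> \<in># lex_orders XS. subseq [(a1, b1), (a2, b2), (a3, b3)] \<tau>#}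
    = size {#\<pi> \<in># XS. (if a1 = a2 then subseq [b1, b2] \<pi> else subseq [a1, a2] \<pi>) \<and>
                      (if a2 = a3 then subseq [b2, b3] \<pi> else subseq [a2, a3] \<pi>)#}
    + size {#\<pi> \<in># XS. (if a1 = a2 then subseq [b2, b1] \<pi> else subseq [a1, a2] \<pi>) \<and>
                      (if a2 = a3 then subseq [b3, b2] \<pi> else subseq [a2, a3] \<pi>)#}"
proof -
  have "size {#\<tau> \<in># lex_orders XS. subseq [(a1, b1), (a2, b2), (a3, b3)] \<tau>#}
    = size {#\<pi> \<in># XS. subseq [(a1, b1), (a2, b2), (a3, b3)] (List.product \<pi> \<pi>)#}
    + size {#\<pi> \<in># XS. subseq [(a1, b1), (a2, b2), (a3, b3)] (List.product \<pi> (rev \<pi>))#}"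
    by (simp add: lex_orders_def filter_mset_image_mset)
  then show ?thesis
    using p psca_on_memD[OF XS]
    by (simp add: subseq_triple_product subseq_pair_rev cong: size_filter_mset_cong)
qed

text \<open>
  The count is 2\<lambda>, 3\<lambda>, 3\<lambda>, 0 or 2\<lambda> according as the three
  first coordinates all agree, only the first two agree, only the last two agree, only the
  outer two agree, or all differ; the identity encodes this table without subtraction.
\<close>

lemma count_lex_orders:
  assumes XS: "psca_on A lam XS" and A: "finite A" "card A \<ge> 3"
    and p: "{(a1, b1), (a2, b2), (a3, b3)} \<subseteq> A \<times> A" "distinct [(a1, b1), (a2, b2), (a3, b3)]"
  shows "size {#\<tau> \<in># lex_orders XS. subseq [(a1, b1), (a2, b2), (a3, b3)] \<tau>#}
      + 2 * lam * of_bool (a1 = a3) = 2 * lam + lam * of_bool (a1 = a2) + lam * of_bool (a2 = a3)"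
proof -
  note lex = size_filter_lex_orders[OF XS p(1)]
  have triple: "subseq [x, y] \<pi> \<and> subseq [y, z] \<pi> \<longleftrightarrow> subseq [x, y, z] \<pi>" if "\<pi> \<in># XS" for x y z \<pi>
    using subseq_triple_iff[of \<pi> x y z] psca_on_memD[OF XS that] by simp
  have triple': "subseq [y, z] \<pi> \<and> subseq [x, y] \<pi> \<longleftrightarrow> subseq [x, y, z] \<pi>" if "\<pi> \<in># XS" for x y z \<pi>
    using triple[OF that] by blast
  consider "a1 = a2" "a2 = a3" | "a1 = a2" "a2 \<noteq> a3" | "a1 \<noteq> a2" "a2 = a3"
    | "a1 \<noteq> a2" "a2 \<noteq> a3" "a1 = a3" | "a1 \<noteq> a2" "a2 \<noteq> a3" "a1 \<noteq> a3"
    by blast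
  then show ?thesis
  proof cases
    case 1
    then show ?thesis
      using lex p psca_on_countD[OF XS, of b1 b2 b3] psca_on_countD[OF XS, of b3 b2 b1]
      by (auto simp: triple triple' cong: size_filter_mset_cong)
  next
    case 2
    then show ?thesis
      using lex p psca_on_pair_count_split[OF XS A, of a2 a3 b1 b2] by (simp add: conj_commute)
  next
    case 3
    then show ?thesis
      using lex p psca_on_pair_count_split[OF XS A, of a1 a2 b2 b3] by simp
  next
    case 4
    moreover have "\<not> (subseq [a1, a2] \<pi> \<and> subseq [a2, a1] \<pi>)" if "\<pi> \<in># XS" for \<pi>
      using subseq_pair_asym[of \<pi> a1 a2] psca_on_memD[OF XS that] by auto
    ultimately show ?thesis
      using lex by (simp cong: size_filter_mset_cong)
  next
    case 5
    then show ?thesis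
      using lex p psca_on_countD[OF XS, of a1 a2 a3] by (simp add: triple cong: size_filter_mset_cong)
  qed
qed

section \<open>Orders of an affine plane\<close>

text \<open>
  Coordinates adapted to the direction d (None: vertical lines, Some s: lines of slope s):
  the first coordinate of line_coords d p names the line of direction d through p and the
  second is the position of p on it.
\<close>

fun line_coords :: "'a::field option \<Rightarrow> 'a \<times> 'a \<Rightarrow> 'a \<times> 'a" where
  "line_coords None p = p"
| "line_coords (Some s) (x, y) = (y - s * x, x)"

fun line_point :: "'a::field option \<Rightarrow> 'a \<times> 'a \<Rightarrow> 'a \<times> 'a" where
  "line_point None q = q"
| "line_point (Some s) (a, b) = (b, a + s * b)"

lemma line_point_line_coords [simp]: "line_point d (line_coords d p) = p"
  by (cases d; cases p) auto

lemma line_coords_line_point [simp]: "line_coords d (line_point d q) = q"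
  by (cases d; cases q) auto

lemma inj_line_point: "inj (line_point d)"
  by (metis injI line_coords_line_point)

lemma inj_line_coords: "inj (line_coords d)"
  by (metis injI line_point_line_coords)

definition dirs :: "'a::field set \<Rightarrow> 'a option set" where
  "dirs F = insert None (Some ` F)"

definition dir :: "'a::field \<times> 'a \<Rightarrow> 'a \<times> 'a \<Rightarrow> 'a option" where
  "dir p q = (if fst p = fst q then None else Some ((snd p - snd q) / (fst p - fst q)))"

lemma same_line_iff_dir:
  assumes "p \<noteq> q"
  shows "fst (line_coords d p) = fst (line_coords d q) \<longleftrightarrow> d = dir p q"
proof (cases d)
  case (Some s)
  obtain x y x' y' where pq: "p = (x, y)" "q = (x', y')"
    by fastforce
  show ?thesis
  proof (cases "x = x'")
    case False
    then have "y - s * x = y' - s * x' \<longleftrightarrow> s = (y - y') / (x - x')"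
      by (auto simp: field_simps)
    then show ?thesis
      using Some False pq by (simp add: dir_def)
  qed (use assms Some pq in \<open>auto simp: dir_def\<close>)
qed (auto simp: dir_def)

definition field_closed :: "'a::field set \<Rightarrow> bool" where
  "field_closed F \<longleftrightarrow> (\<forall>x\<in>F. \<forall>y\<in>F. x + y \<in> F \<and> x - y \<in> F \<and> x * y \<in> F \<and> x / y \<in> F)"

lemma dir_in_dirs: "field_closed F \<Longrightarrow> p \<in> F \<times> F \<Longrightarrow> q \<in> F \<times> F \<Longrightarrow> dir p q \<in> dirs F"
  unfolding field_closed_def dirs_def dir_def by auto

lemma line_coords_in: "field_closed F \<Longrightarrow> d \<in> dirs F \<Longrightarrow> p \<in> F \<times> F \<Longrightarrow> line_coords d p \<in> F \<times> F"
  unfolding field_closed_def dirs_def by (cases p) auto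

lemma line_point_in: "field_closed F \<Longrightarrow> d \<in> dirs F \<Longrightarrow> q \<in> F \<times> F \<Longrightarrow> line_point d q \<in> F \<times> F"
  unfolding field_closed_def dirs_def by (cases q) auto

lemma line_point_image:
  assumes "field_closed F" "d \<in> dirs F"
  shows "line_point d ` (F \<times> F) = F \<times> F"
proof
  show "line_point d ` (F \<times> F) \<subseteq> F \<times> F"
    using line_point_in[OF assms] by blast
  show "F \<times> F \<subseteq> line_point d ` (F \<times> F)"
  proof
    fix q assume "q \<in> F \<times> F"
    then show "q \<in> line_point d ` (F \<times> F)"
      using line_coords_in[OF assms] by (metis image_eqI line_point_line_coords)
  qed
qed

lemma card_dirs: "finite F \<Longrightarrow> card (dirs F) = card F + 1"
  unfolding dirs_def by (simp add: card_image)

lemma dirs_same_line: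
  assumes "field_closed F" "p \<in> F \<times> F" "q \<in> F \<times> F" "p \<noteq> q"
  shows "dirs F \<inter> {d. fst (line_coords d p) = fst (line_coords d q)} = {dir p q}"
  using same_line_iff_dir[OF assms(4)] dir_in_dirs[OF assms(1-3)] by auto

definition plane_orders :: "'a::field set \<Rightarrow> 'a list multiset \<Rightarrow> ('a \<times> 'a) list multiset" where
  "plane_orders F XS = (\<Sum>d\<in>dirs F. {#map (line_point d) \<tau>. \<tau> \<in># lex_orders XS#})"

lemma size_filter_mset_sum:
  "size {#x \<in># (\<Sum>a\<in>A. M a). P x#} = (\<Sum>a\<in>A. size {#x \<in># M a. P x#})"
  by (induction A rule: infinite_finite_induct) auto

lemma plane_orders_memD:
  assumes "psca_on F lam XS" "finite F" "field_closed F" "\<tau>' \<in># plane_orders F XS"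
  shows "distinct \<tau>' \<and> set \<tau>' = F \<times> F"
proof -
  obtain d \<tau> where d: "d \<in> dirs F" and \<tau>: "\<tau> \<in># lex_orders XS" and "\<tau>' = map (line_point d) \<tau>"
    using assms(2,4) by (auto simp: plane_orders_def set_mset_sum dirs_def)
  then show ?thesis
    using lex_orders_memD[OF assms(1) \<tau>] line_point_image[OF assms(3) d] inj_line_point
    by (auto simp: distinct_map intro: inj_on_subset)
qed

lemma size_filter_plane_orders:
  "size {#\<tau> \<in># plane_orders F XS. subseq xs \<tau>#}
    = (\<Sum>d\<in>dirs F. size {#\<tau> \<in># lex_orders XS. subseq (map (line_coords d) xs) \<tau>#})"
proof -
  have "subseq xs (map (line_point d) \<tau>) \<longleftrightarrow> subseq (map (line_coords d) xs) \<tau>" for d \<tau>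
    using subseq_map_inj_on_iff[OF inj_on_subset[OF inj_line_point subset_UNIV],
        of d "map (line_coords d) xs" \<tau>] by (simp add: comp_def)
  then show ?thesis
    unfolding plane_orders_def size_filter_mset_sum by (simp add: filter_mset_image_mset)
qed

theorem psca_on_plane_orders:
  assumes XS: "psca_on F lam XS" and F: "finite F" "card F \<ge> 3" "field_closed F"
  shows "psca_on (F \<times> F) (2 * (card F + 1) * lam) (plane_orders F XS)"
  unfolding psca_on_def
proof (intro conjI ballI impI)
  fix \<tau>' assume "\<tau>' \<in># plane_orders F XS"
  then show "distinct \<tau>'" "set \<tau>' = F \<times> F"
    using plane_orders_memD[OF XS F(1,3)] by auto
next
  fix x1 x2 x3 assume x: "x1 \<in> F \<times> F" "x2 \<in> F \<times> F" "x3 \<in> F \<times> F" "distinct [x1, x2, x3]"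
  define c where "c d = size {#\<tau> \<in># lex_orders XS. subseq (map (line_coords d) [x1, x2, x3]) \<tau>#}" for d
  define same :: "'a option \<Rightarrow> 'a \<times> 'a \<Rightarrow> 'a \<times> 'a \<Rightarrow> nat"
    where "same d p q = of_bool (fst (line_coords d p) = fst (line_coords d q))" for d p q
  have count_dir: "c d + 2 * lam * same d x1 x3 = 2 * lam + lam * same d x1 x2 + lam * same d x2 x3"
    if "d \<in> dirs F" for d
  proof -
    let ?y = "line_coords d"
    have "distinct [?y x1, ?y x2, ?y x3]"
      using x(4) by (simp add: inj_eq[OF inj_line_coords])
    then show ?thesis
      unfolding c_def same_def
      using count_lex_orders[OF XS F(1,2), of "fst (?y x1)" "snd (?y x1)" "fst (?y x2)" "snd (?y x2)"
          "fst (?y x3)" "snd (?y x3)"] line_coords_in[OF F(3) that] x(1-3)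
      by simp
  qed
  have one: "(\<Sum>d\<in>dirs F. same d p q) = 1" if "p \<in> F \<times> F" "q \<in> F \<times> F" "p \<noteq> q" for p q
    using dirs_same_line[OF F(3) that] F(1) by (simp add: same_def dirs_def)
  have "(\<Sum>d\<in>dirs F. c d + 2 * lam * same d x1 x3)
      = (\<Sum>d\<in>dirs F. 2 * lam + lam * same d x1 x2 + lam * same d x2 x3)"
    by (rule sum.cong) (simp_all add: count_dir)
  then have "(\<Sum>d\<in>dirs F. c d) + 2 * lam = 2 * lam * card (dirs F) + lam + lam"
    using one x by (simp add: sum.distrib flip: sum_distrib_left)
  then show "size {#\<tau> \<in># plane_orders F XS. subseq [x1, x2, x3] \<tau>#} = 2 * (card F + 1) * lam"
    unfolding size_filter_plane_orders c_def[symmetric] using card_dirs[OF F(1)] by simp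
qed

section \<open>Finite subfields of an algebraically closed field\<close>

definition GF :: "nat \<Rightarrow> 'a::field set" where
  "GF j = {x. x ^ (CHAR('a) ^ j) = x}"

lemma field_closed_GF:
  assumes "CHAR('a::field) > 0"
  shows "field_closed (GF j :: 'a set)"
  unfolding field_closed_def GF_def
proof (intro ballI conjI; simp)
  let ?m = "CHAR('a) ^ j"
  fix x y :: 'a assume x: "x ^ ?m = x" and y: "y ^ ?m = y"
  have dream: "(u + v) ^ ?m = u ^ ?m + v ^ ?m" for u v :: 'a
    using prime_CHAR_semidom[OF assms] by (rule freshmans_dream') simp
  show "(x + y) ^ ?m = x + y"
    using x y dream by simp
  have "(x - y) ^ ?m + y = x"
    using dream[of "x - y" y] x y by simp
  then show "(x - y) ^ ?m = x - y"
    by (simp add: eq_diff_eq)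
  show "(x * y) ^ ?m = x * y"
    using x y by (simp add: power_mult_distrib)
  show "(x / y) ^ ?m = x / y"
    using x y by (simp add: power_divide)
qed

lemma size_proots_alg_closed: "size (proots p) = Polynomial.degree p"
  for p :: "'a::alg_closed_field poly"
proof (cases "p = 0")
  case False
  then obtain A where A: "size A = Polynomial.degree p"
      "p = Polynomial.smult (Polynomial.lead_coeff p) (\<Prod>x\<in>#A. [:-x, 1:])"
    using alg_closed_imp_factorization by blast
  have "proots (\<Prod>x\<in>#B. [:-x, 1:]) = B" for B :: "'a multiset"
  proof (induction B)
    case (add x B)
    moreover have "(\<Prod>y\<in>#B. [:-y, 1:]) \<noteq> (0 :: 'a poly)"
      by (auto simp: prod_mset_zero_iff)
    ultimately show ?case
      by (simp add: proots_mult del: mult_pCons_left)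
  qed simp
  then have "proots p = A"
    using False by (subst A(2)) simp
  then show ?thesis
    using A(1) by simp
qed simp

lemma not_square_dvd_if_pderiv_nonzero:
  fixes p :: "'a::idom poly"
  assumes "poly (pderiv p) a \<noteq> 0"
  shows "\<not> [:-a, 1:] ^ 2 dvd p"
proof
  assume "[:-a, 1:] ^ 2 dvd p"
  then obtain q where "p = [:-a, 1:] ^ 2 * q" ..
  then have p: "p = [:-a, 1:] * ([:-a, 1:] * q)"
    by (metis power2_eq_square mult.assoc)
  have root: "poly [:-a, 1:] a = 0"
    by simp
  have "poly (pderiv p) a = 0"
    unfolding p by (simp only: pderiv_mult poly_add poly_mult root mult_zero_left mult_zero_right
        add_0_left add_0_right)
  then show False
    using assms by contradiction
qed

lemma card_roots_alg_closed:
  fixes p :: "'a::alg_closed_field poly"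
  assumes "p \<noteq> 0" "\<And>a. poly p a = 0 \<Longrightarrow> poly (pderiv p) a \<noteq> 0"
  shows "card {x. poly p x = 0} = Polynomial.degree p"
proof -
  have "count (proots p) a \<le> 1" for a
  proof (cases "poly p a = 0")
    case True
    then show ?thesis
      using assms(1) order_divides[of a 2 p] not_square_dvd_if_pderiv_nonzero[OF assms(2)[OF True]]
      by simp
  qed (use assms(1) order_root[of p a] in simp)
  then have "proots p = mset_set (set_mset (proots p))"
    by (intro multiset_eqI) (metis count_mset_set(1,3) count_eq_zero_iff finite_set_mset le_Suc_eq
        le_zero_eq One_nat_def)
  then have "card (set_mset (proots p)) = size (proots p)"
    by (metis size_mset_set)
  then show ?thesis
    using assms(1) by (simp add: size_proots_alg_closed)
qed

lemma card_GF:
  assumes "CHAR('a::alg_closed_field) > 0" "j \<ge> 1"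
  shows "finite (GF j :: 'a set)" "card (GF j :: 'a set) = CHAR('a) ^ j"
proof -
  define m where "m = CHAR('a) ^ j"
  define P :: "'a poly" where "P = Polynomial.monom 1 m + [:0, -1:]"
  have GF: "GF j = {x. poly P x = 0}"
    by (simp add: GF_def P_def m_def poly_monom)
  have "m \<ge> 2"
    unfolding m_def using prime_ge_2_nat[OF prime_CHAR_semidom[OF assms(1)]] assms(2)
      self_le_power[of "CHAR('a)" j] by linarith
  then have deg: "Polynomial.degree P = m"
    unfolding P_def by (subst degree_add_eq_left) (auto simp: degree_monom_eq)
  then have "P \<noteq> 0"
    using \<open>m \<ge> 2\<close> by auto
  moreover have "(of_nat m :: 'a) = 0"
    using assms(2) by (simp add: m_def of_nat_eq_0_iff_char_dvd)
  then have "pderiv P = [:-1:]"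
    by (simp add: P_def pderiv_monom pderiv_add pderiv_pCons)
  ultimately show "finite (GF j :: 'a set)" "card (GF j :: 'a set) = CHAR('a) ^ j"
    using card_roots_alg_closed[of P] poly_roots_finite[of P] deg by (simp_all add: GF m_def)
qed

section \<open>Iterating the construction\<close>

lemma CHAR_bit: "CHAR(bit) = 2"
  by (rule CHAR_eq_posI) (auto simp: less_2_cases_iff)

lemma psca_on_square_step:
  assumes XS: "psca_on {1..(2::nat) ^ j} lam XS" and j: "j \<ge> 2" and k: "k \<le> 2 * j"
  obtains Y where "psca_on {1..(2::nat) ^ k} (2 * (2 ^ j + 1) * lam) Y"
proof -
  let ?F = "GF j :: bit alg_closure set"
  have char: "CHAR(bit alg_closure) > 0"
    by (simp add: CHAR_bit)
  have F: "finite ?F" "card ?F = 2 ^ j"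
    using card_GF[OF char] j by (simp_all add: CHAR_bit)
  obtain XF where XF: "psca_on ?F lam XF"
    by (rule psca_on_card_le[OF XS]) (use F in auto)
  have "(2::nat) ^ 2 \<le> 2 ^ j"
    using j by (intro power_increasing) auto
  then have "psca_on (?F \<times> ?F) (2 * (2 ^ j + 1) * lam) (plane_orders ?F XF)"
    using psca_on_plane_orders[OF XF F(1) _ field_closed_GF[OF char]] F(2) by simp
  moreover have "card {1..(2::nat) ^ k} \<le> card (?F \<times> ?F)"
    using k F(2) by (simp add: card_cartesian_product power_add[symmetric] mult_2[symmetric]
        power_increasing)
  ultimately show thesis
    using that psca_on_card_le F(1) by blast
qed

lemma psca_on_four: "psca_on {1..4} 1 {#[1, 2, 3, 4], [1, 4, 3, 2], [2, 4, 1, 3], [3, 2, 1, 4],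
    [3, 4, 1, 2], [4, 2, 3, 1 :: nat]#}"
proof -
  have "{1..4} = {1, 2, 3, 4 :: nat}"
    by auto
  then show ?thesis
    unfolding psca_on_def by (simp add: insert_commute)
qed

lemma square_step_le:
  assumes "j + j \<le> k + 1" "j \<le> k"
  shows "2 * (2 ^ j + 1) * 2 ^ j \<le> 7 * (2::nat) ^ k"
proof -
  have "(2::nat) ^ (j + j) \<le> 2 ^ (k + 1)" "(2::nat) ^ j \<le> 2 ^ k"
    using assms by (intro power_increasing; simp)+
  moreover have "2 * (2 ^ j + 1) * 2 ^ j = 2 * 2 ^ (j + j) + 2 * (2::nat) ^ j"
    by (simp add: algebra_simps power_add)
  moreover have "(2::nat) ^ (k + 1) = 2 * 2 ^ k"
    by simp
  ultimately show ?thesis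
    by linarith
qed

lemma psca_on_pow2:
  assumes "2 \<le> k" "k \<le> 2 ^ d"
  shows "\<exists>lam XS. 0 < lam \<and> lam \<le> 2 ^ k * 7 ^ d \<and> psca_on {1..(2::nat) ^ k} lam XS"
  using assms
proof (induction d arbitrary: k)
  case (Suc d)
  show ?case
  proof (cases "k = 2")
    case True
    then show ?thesis
      using psca_on_four by (intro exI[of _ 1]) auto
  next
    case False
    define j where "j = (k + 1) div 2"
    have j: "2 \<le> j" "j \<le> 2 ^ d" "k \<le> 2 * j" "j + j \<le> k + 1" "j \<le> k"
      using False Suc.prems unfolding j_def by auto
    obtain lam XS where IH: "0 < lam" "lam \<le> 2 ^ j * 7 ^ d" "psca_on {1..(2::nat) ^ j} lam XS"
      using Suc.IH[OF j(1,2)] by blast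
    obtain Y where "psca_on {1..(2::nat) ^ k} (2 * (2 ^ j + 1) * lam) Y"
      using psca_on_square_step[OF IH(3) j(1,3)] .
    moreover have "2 * (2 ^ j + 1) * lam \<le> 2 ^ k * 7 ^ Suc d"
    proof -
      have "2 * (2 ^ j + 1) * lam \<le> (2 * (2 ^ j + 1) * 2 ^ j) * 7 ^ d"
        using mult_le_mono2[OF IH(2), of "2 * (2 ^ j + 1)"] by (simp only: mult.assoc)
      also have "\<dots> \<le> (7 * 2 ^ k) * 7 ^ d"
        using square_step_le[OF j(4,5)] by (rule mult_le_mono1)
      finally show ?thesis
        by simp
    qed
    ultimately show ?thesis
      using IH(1) by (intro exI[of _ "2 * (2 ^ j + 1) * lam"]) auto
  qed
qed simp

lemma g3_le_pow2:
  assumes "2 \<le> k" "k \<le> 2 ^ d" "n \<le> 2 ^ k"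
  shows "g n 3 \<le> 2 ^ k * 7 ^ d"
proof -
  obtain lam XS where "0 < lam" "lam \<le> 2 ^ k * 7 ^ d" "psca_on {1..(2::nat) ^ k} lam XS"
    using psca_on_pow2[OF assms(1,2)] by blast
  moreover from this(3) have "psca_on {1..n} lam {#filter (\<lambda>x. x \<in> {1..n}) \<pi>. \<pi> \<in># XS#}"
    using assms(3) by (intro psca_on_restrict) auto
  ultimately show ?thesis
    using g_le_if_psca_on by fastforce
qed

lemma pow2_bracket:
  fixes n :: nat
  assumes "2 \<le> n"
  obtains k :: nat where "2 ^ k < n" "n \<le> 2 ^ Suc k"
proof -
  obtain k where k: "n \<le> 2 ^ k" "\<forall>i<k. \<not> n \<le> 2 ^ i"
    using ex_least_nat_le[of "\<lambda>k. n \<le> 2 ^ k" n] less_exp[of n] assms by auto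
  then obtain i where "k = Suc i"
    using assms by (cases k) auto
  then show thesis
    using that[of i] k(1) k(2)[rule_format, of i] by (simp add: not_le)
qed

lemma pow2_powr_log:
  assumes "b > 0"
  shows "((2::real) ^ m) powr log 2 b = b ^ m"
proof -
  have "((2::real) ^ m) powr log 2 b = (2 powr log 2 b) powr real m"
    by (simp add: powr_realpow[symmetric] powr_powr mult.commute)
  then show ?thesis
    using assms by (simp add: powr_realpow)
qed

lemma seven_pow_le_powr:
  assumes "2 ^ d < m" "real m \<le> x"
  shows "(7::real) ^ d \<le> x powr log 2 7"
proof -
  have "(7::real) ^ d = (2 ^ d) powr log 2 7"
    by (simp add: pow2_powr_log)
  also have "\<dots> \<le> real m powr log 2 7"
    using assms(1) by (intro powr_mono2) (simp_all add: less_imp_le flip: of_nat_less_iff)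
  also have "\<dots> \<le> x powr log 2 7"
    using assms(2) by (intro powr_mono2) auto
  finally show ?thesis .
qed

lemma g3_le_log_bound:
  assumes "n \<ge> 3"
  shows "real (g n 3) \<le> 98 * real n * log 2 (real n) powr log 2 7"
proof -
  obtain k where k: "2 ^ k < n" "n \<le> 2 ^ Suc k"
    by (rule pow2_bracket[of n]) (use assms in auto)
  then have "2 \<le> Suc k"
    using assms by (cases k) auto
  then obtain d where d: "2 ^ d < Suc k" "Suc k \<le> 2 ^ Suc d"
    by (rule pow2_bracket)
  have pow_k: "(2::real) ^ k < real n"
    using k(1) by (metis of_nat_less_iff of_nat_numeral of_nat_power)
  have log: "1 \<le> log 2 (real n)" "real k < log 2 (real n)"
    using assms pow_k by (simp_all add: less_log_iff powr_realpow)
  have "real (g n 3) \<le> real (2 ^ Suc k * 7 ^ Suc d)"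
    using g3_le_pow2[OF \<open>2 \<le> Suc k\<close> d(2) k(2)] by (simp only: of_nat_le_iff)
  also have "\<dots> = (2 * 2 ^ k) * (7 * 7 ^ d)"
    by simp
  also have "\<dots> \<le> (2 * real n) * (7 * (2 * log 2 (real n)) powr log 2 7)"
  proof (rule mult_mono)
    have "real (Suc k) \<le> 2 * log 2 (real n)"
      using log by simp
    then show "7 * 7 ^ d \<le> 7 * (2 * log 2 (real n)) powr log 2 7"
      using seven_pow_le_powr[OF d(1)] by simp
  qed (use pow_k in simp_all)
  also have "\<dots> = 98 * real n * log 2 (real n) powr log 2 7"
    using log(1) by (simp add: powr_mult)
  finally show ?thesis .
qed

theorem lemma3p3:
  shows "\<exists>C::real. \<forall>n::nat. n \<ge> 3 \<longrightarrow>
           real (g n 3) \<le> C * real n * (log 2 (real n)) powr (log 2 7)"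
  using g3_le_log_bound by blast

end
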